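(* Let $n\ge 1$, $\mathbf a\in\mathbb{R}^n$, and write $P=P(\mathbf a)$, $N=N(\mathbf a)$, $Z=Z(\mathbf a)$. Then $$P(J_{n,1}\mathbf a)\ge \frac{P(P+1)}{2}+PZ,\quad N(J_{n,1}\mathbf a)\ge \frac{N(N+1)}{2}+NZ,\quad Z(J_{n,1}\mathbf a)\le \frac{Z(Z+1)}{2}+PN,$$ and all three are equalities when $PN=0$.
   Context: For $\mathbf x\in\mathbb{R}^m$, $P(\mathbf x)$, $N(\mathbf x)$, $Z(\mathbf x)$ denote the numbers of positive, negative and zero components of $\mathbf x$. $J_{n,1}$ is the matrix, with respect to the left lexicographic monomial bases $(x_1,\dots,x_n)$ of degree 1 and $(x_1^2,x_1x_2,\dots,x_n^2)$ of degree 2, of the map $A(x)\mapsto A(x)(x_1+\cdots+x_n)$; thus $J_{n,1}\mathbf a$ is the coefficient vector of $(a_1x_1+\cdots+a_nx_n)(x_1+\cdots+x_n)$. *)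

theory Defs
  imports Complex_Main
begin

text \<open>Vectors in R^m are represented as real lists of length m (0-based indices).\<close>

definition Pcnt :: "real list \<Rightarrow> nat" where
  "Pcnt xs = length (filter (\<lambda>x. x > 0) xs)"

definition Ncnt :: "real list \<Rightarrow> nat" where
  "Ncnt xs = length (filter (\<lambda>x. x < 0) xs)"

definition Zcnt :: "real list \<Rightarrow> nat" where
  "Zcnt xs = length (filter (\<lambda>x. x = 0) xs)"

text \<open>Degree-2 monomials x_i x_j (i \<le> j) in left lexicographic order.\<close>
definition mons2 :: "nat \<Rightarrow> (nat \<times> nat) list" where
  "mons2 n = concat (map (\<lambda>i. map (\<lambda>j. (i, j)) [i..<n]) [0..<n])"

text \<open>Matrix entry of J_{n,1}: row indexed by the monomial x_i x_j, column k
  by x_k; it is the coefficient of x_i x_j in x_k (x_1 + ... + x_n).\<close>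
definition Jentry :: "nat \<times> nat \<Rightarrow> nat \<Rightarrow> real" where
  "Jentry m k = (if k = fst m \<or> k = snd m then 1 else 0)"

definition Jmul :: "nat \<Rightarrow> real list \<Rightarrow> real list" where
  "Jmul n a = map (\<lambda>m. \<Sum>k<n. Jentry m k * a ! k) (mons2 n)"

end

theory Submission
  imports Defs
begin

text \<open>Expanding \<open>(a\<^sub>1x\<^sub>1 + \<dots> + a\<^sub>nx\<^sub>n)(x\<^sub>1 + \<dots> + x\<^sub>n)\<close> along \<open>x\<^sub>1\<close>, the coefficient
  vector of \<open>a = x # xs\<close> is \<open>x\<close>, followed by \<open>x + y\<close> for every \<open>y\<close> in \<open>xs\<close>, followed by the
  coefficient vector of \<open>xs\<close>. This gives an induction on \<open>a\<close>: if \<open>x > 0\<close>, the shifted block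
  turns every positive or zero entry of \<open>xs\<close> into a positive one and can only vanish where
  \<open>xs\<close> is negative; if \<open>x = 0\<close> the block is \<open>xs\<close> itself. Counting these contributions gives
  the bounds for positive and zero entries, with equality when no entry is negative; the
  bound for negative entries and the case without positive entries follow from \<open>a \<mapsto> -a\<close>.\<close>

fun Jrec :: "real list \<Rightarrow> real list" where
  "Jrec [] = []"
| "Jrec (x # xs) = x # map ((+) x) xs @ Jrec xs"

lemma sum_Jentry:
  assumes "i < n" "j < n"
  shows "(\<Sum>k<n. Jentry (i, j) k * a ! k) = (if i = j then a ! i else a ! i + a ! j)"
proof -
  have "(\<Sum>k<n. Jentry (i, j) k * a ! k) = (\<Sum>k<n. if k \<in> {i, j} then a ! k else 0)"
    by (rule sum.cong) (auto simp: Jentry_def)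
  also have "\<dots> = (\<Sum>k\<in>{i, j}. a ! k)"
    using assms by (subst sum.If_cases) (auto intro: arg_cong2[where f = sum])
  finally show ?thesis by auto
qed

lemma Jmul_rows_from:
  assumes "length a = n" "d \<le> n"
  shows "map (\<lambda>m. \<Sum>k<n. Jentry m k * a ! k) (concat (map (\<lambda>i. map (\<lambda>j. (i, j)) [i..<n]) [d..<n]))
    = Jrec (drop d a)"
  using assms(2)
proof (induction d rule: inc_induct)
  case (step d)
  have "drop d a = a ! d # drop (Suc d) a"
    using step.hyps assms(1) by (simp add: Cons_nth_drop_Suc)
  moreover have "drop (Suc d) a = map ((!) a) [Suc d..<n]"
    using assms(1) by (intro nth_equalityI) auto
  ultimately show ?case
    using step sum_Jentry[of d n _ a] by (simp add: upt_conv_Cons)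
qed (use assms(1) in simp)

lemma Jmul_eq_Jrec: "length a = n \<Longrightarrow> Jmul n a = Jrec a"
  using Jmul_rows_from[of a n 0] by (simp add: Jmul_def mons2_def)

lemma counts_simps [simp]:
  "Pcnt [] = 0" "Ncnt [] = 0" "Zcnt [] = 0"
  "Pcnt (x # xs) = (if x > 0 then 1 else 0) + Pcnt xs"
  "Ncnt (x # xs) = (if x < 0 then 1 else 0) + Ncnt xs"
  "Zcnt (x # xs) = (if x = 0 then 1 else 0) + Zcnt xs"
  "Pcnt (xs @ ys) = Pcnt xs + Pcnt ys"
  "Ncnt (xs @ ys) = Ncnt xs + Ncnt ys"
  "Zcnt (xs @ ys) = Zcnt xs + Zcnt ys"
  by (auto simp: Pcnt_def Ncnt_def Zcnt_def)

lemma counts_sum_length: "Pcnt xs + Ncnt xs + Zcnt xs = length xs"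
  by (induction xs) auto

lemma counts_uminus [simp]:
  "Pcnt (map uminus xs) = Ncnt xs"
  "Ncnt (map uminus xs) = Pcnt xs"
  "Zcnt (map uminus xs) = Zcnt xs"
  by (induction xs) auto

lemma Jrec_uminus: "Jrec (map uminus a) = map uminus (Jrec a)"
  by (induction a) auto

lemma length_Jrec: "2 * length (Jrec a) = length a * (length a + 1)"
  by (induction a) auto

lemma Pcnt_shift_ge: "x > 0 \<Longrightarrow> Pcnt xs + Zcnt xs \<le> Pcnt (map ((+) x) xs)"
  by (induction xs) auto

lemma Zcnt_shift_le: "x > 0 \<Longrightarrow> Zcnt (map ((+) x) xs) \<le> Ncnt xs"
  by (induction xs) auto

lemma Zcnt_shift_neg_le: "x < 0 \<Longrightarrow> Zcnt (map ((+) x) xs) \<le> Pcnt xs"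
  by (induction xs) auto

lemma map_add_0 [simp]: "map ((+) (0::'a::monoid_add)) xs = xs"
  by (induction xs) auto

lemma Ncnt_shift_eq_0: "x \<ge> 0 \<Longrightarrow> Ncnt xs = 0 \<Longrightarrow> Ncnt (map ((+) x) xs) = 0"
  by (induction xs) auto

lemma Pcnt_Jrec_ge: "Pcnt a * (Pcnt a + 1) + 2 * Pcnt a * Zcnt a \<le> 2 * Pcnt (Jrec a)"
proof (induction a)
  case (Cons x xs)
  consider "x > 0" | "x < 0" | "x = 0" by linarith
  then show ?case
    using Cons.IH Pcnt_shift_ge[of x xs] by cases (auto simp: algebra_simps)
qed simp

lemma Zcnt_Jrec_le: "2 * Zcnt (Jrec a) \<le> Zcnt a * (Zcnt a + 1) + 2 * Pcnt a * Ncnt a"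
proof (induction a)
  case (Cons x xs)
  consider "x > 0" | "x < 0" | "x = 0" by linarith
  then show ?case
    using Cons.IH Zcnt_shift_le[of x xs] Zcnt_shift_neg_le[of x xs]
    by cases (auto simp: algebra_simps)
qed simp

lemma Ncnt_Jrec_ge: "Ncnt a * (Ncnt a + 1) + 2 * Ncnt a * Zcnt a \<le> 2 * Ncnt (Jrec a)"
  using Pcnt_Jrec_ge[of "map uminus a"] by (simp add: Jrec_uminus)

lemma counts_Jrec_no_neg:
  assumes "Ncnt a = 0"
  shows "Ncnt (Jrec a) = 0"
    and "2 * Zcnt (Jrec a) = Zcnt a * (Zcnt a + 1)"
    and "2 * Pcnt (Jrec a) = Pcnt a * (Pcnt a + 1) + 2 * Pcnt a * Zcnt a"
proof -
  show N: "Ncnt (Jrec a) = 0"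
    using assms by (induction a) (auto simp: Ncnt_shift_eq_0 split: if_splits)
  show Z: "2 * Zcnt (Jrec a) = Zcnt a * (Zcnt a + 1)"
    using assms
  proof (induction a)
    case (Cons x xs)
    then show ?case
      using Zcnt_shift_le[of x xs] by (cases "x = 0") (auto simp: algebra_simps split: if_splits)
  qed simp
  have "2 * Pcnt (Jrec a) = 2 * length (Jrec a) - 2 * Zcnt (Jrec a)"
    using counts_sum_length[of "Jrec a"] N by simp
  also have "\<dots> = (Pcnt a + Zcnt a) * (Pcnt a + Zcnt a + 1) - Zcnt a * (Zcnt a + 1)"
    using counts_sum_length[of a] assms by (simp add: length_Jrec Z)
  also have "\<dots> = Pcnt a * (Pcnt a + 1) + 2 * Pcnt a * Zcnt a"
    by (simp add: algebra_simps)
  finally show "2 * Pcnt (Jrec a) = Pcnt a * (Pcnt a + 1) + 2 * Pcnt a * Zcnt a" .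
qed

lemma counts_Jrec_no_pos:
  assumes "Pcnt a = 0"
  shows "Pcnt (Jrec a) = 0"
    and "2 * Zcnt (Jrec a) = Zcnt a * (Zcnt a + 1)"
    and "2 * Ncnt (Jrec a) = Ncnt a * (Ncnt a + 1) + 2 * Ncnt a * Zcnt a"
  using counts_Jrec_no_neg[of "map uminus a"] assms by (simp_all add: Jrec_uminus)

theorem lemma3p1:
  fixes n :: nat and a :: "real list"
  assumes "n \<ge> 1" and "length a = n"
  defines "P \<equiv> real (Pcnt a)" and "N \<equiv> real (Ncnt a)" and "Z \<equiv> real (Zcnt a)"
  shows "real (Pcnt (Jmul n a)) \<ge> P * (P + 1) / 2 + P * Z
       \<and> real (Ncnt (Jmul n a)) \<ge> N * (N + 1) / 2 + N * Z
       \<and> real (Zcnt (Jmul n a)) \<le> Z * (Z + 1) / 2 + P * N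
       \<and> (P * N = 0 \<longrightarrow>
            real (Pcnt (Jmul n a)) = P * (P + 1) / 2 + P * Z
          \<and> real (Ncnt (Jmul n a)) = N * (N + 1) / 2 + N * Z
          \<and> real (Zcnt (Jmul n a)) = Z * (Z + 1) / 2 + P * N)"
proof -
  have half: "real y / 2 \<le> real x \<longleftrightarrow> y \<le> 2 * x" "real x \<le> real y / 2 \<longleftrightarrow> 2 * x \<le> y"
    "real x = real y / 2 \<longleftrightarrow> 2 * x = y" for x y :: nat
    by linarith+
  have bounds: "P * (P + 1) / 2 + P * Z = real (Pcnt a * (Pcnt a + 1) + 2 * Pcnt a * Zcnt a) / 2"
    "N * (N + 1) / 2 + N * Z = real (Ncnt a * (Ncnt a + 1) + 2 * Ncnt a * Zcnt a) / 2"
    "Z * (Z + 1) / 2 + P * N = real (Zcnt a * (Zcnt a + 1) + 2 * Pcnt a * Ncnt a) / 2"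
    unfolding P_def N_def Z_def by (simp_all add: field_simps)
  have PN: "P * N = 0 \<longleftrightarrow> Pcnt a = 0 \<or> Ncnt a = 0"
    unfolding P_def N_def by simp
  show ?thesis
    unfolding Jmul_eq_Jrec[OF assms(2)] bounds half PN
    using Pcnt_Jrec_ge[of a] Ncnt_Jrec_ge[of a] Zcnt_Jrec_le[of a]
      counts_Jrec_no_neg[of a] counts_Jrec_no_pos[of a]
    by auto
qed

end
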